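(* Let $\mathcal{F}$ be a $3$-uniform linear family with $S_{\mathcal{F}}=\emptyset$, let $\mathcal{M}$ be a maximum matching of $\mathcal{F}$, and let $\mathcal{M}_1=\{A_1,\ldots,A_m\}$, $\mathcal{M}_2$, $x_1,\ldots,x_m$ and $\mathcal{E}_2$ be as defined below. Then $\mathcal{E}_2=\emptyset$.
   Context: A family is a finite collection of distinct subsets of a vertex set; $3$-uniform means every member has exactly $3$ elements and linear means any two distinct members share at most one vertex. A matching is a collection of pairwise disjoint members; a maximum matching is one of largest size. $S_{\mathcal{F}}$ is the set of vertices covered by every maximum matching of $\mathcal{F}$. $\mathcal{F}_x=\{E\in\mathcal{F}:x\in E\}$; for a subfamily $\mathcal{N}$, $X_{\mathcal{N}}=\bigcup_{E\in\mathcal{N}}E$. $D_1(\mathcal{F})=\{E\in\mathcal{F}:|E\cap X_{\mathcal{M}}|=1\}$; for $A\in\mathcal{M}$, $D_1(A)=\{E\in D_1(\mathcal{F}):E\cap A\neq\emptyset\}$ and $d_1(A)=|D_1(A)|$. Let $\mathcal{M}_1=\{A\in\mathcal{M}: d_1(A)\geq 7\}=\{A_1,\ldots,A_m\}$ and $\mathcal{M}_2=\mathcal{M}\setminus\mathcal{M}_1$. For each $A_i\in\mathcal{M}_1$ all edges of $D_1(A_i)$ contain a common vertex of $A_i$ (such a vertex exists and is unique); call it $x_i$. Define $\mathcal{E}_1=\bigcup_{i=1}^m\mathcal{F}_{x_i}$ and $\mathcal{E}_2=\{E\in\mathcal{F}: E\cap B=\emptyset\text{ for all }B\in\mathcal{M}_2\}\setminus\mathcal{E}_1$.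 *)

theory Defs
  imports Main
begin

definition uniform3 :: "'a set set \<Rightarrow> bool" where
  "uniform3 F \<longleftrightarrow> (\<forall>E\<in>F. card E = 3)"

definition linear_family :: "'a set set \<Rightarrow> bool" where
  "linear_family F \<longleftrightarrow> (\<forall>E\<in>F. \<forall>E'\<in>F. E \<noteq> E' \<longrightarrow> card (E \<inter> E') \<le> 1)"

definition is_matching :: "'a set set \<Rightarrow> 'a set set \<Rightarrow> bool" where
  "is_matching F N \<longleftrightarrow> N \<subseteq> F \<and> (\<forall>E\<in>N. \<forall>E'\<in>N. E \<noteq> E' \<longrightarrow> E \<inter> E' = {})"

definition is_max_matching :: "'a set set \<Rightarrow> 'a set set \<Rightarrow> bool" where
  "is_max_matching F M \<longleftrightarrow> is_matching F M \<and> (\<forall>N. is_matching F N \<longrightarrow> card N \<le> card M)"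

definition S_fam :: "'a set set \<Rightarrow> 'a set" where
  "S_fam F = {v. \<forall>M. is_max_matching F M \<longrightarrow> v \<in> \<Union>M}"

definition star :: "'a set set \<Rightarrow> 'a \<Rightarrow> 'a set set" where
  "star F x = {E\<in>F. x \<in> E}"

definition D1 :: "'a set set \<Rightarrow> 'a set set \<Rightarrow> 'a set set" where
  "D1 F M = {E\<in>F. card (E \<inter> \<Union>M) = 1}"

definition D1A :: "'a set set \<Rightarrow> 'a set set \<Rightarrow> 'a set \<Rightarrow> 'a set set" where
  "D1A F M A = {E\<in>D1 F M. E \<inter> A \<noteq> {}}"

definition d1 :: "'a set set \<Rightarrow> 'a set set \<Rightarrow> 'a set \<Rightarrow> nat" where
  "d1 F M A = card (D1A F M A)"

definition M1 :: "'a set set \<Rightarrow> 'a set set \<Rightarrow> 'a set set" where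
  "M1 F M = {A\<in>M. d1 F M A \<ge> 7}"

definition M2 :: "'a set set \<Rightarrow> 'a set set \<Rightarrow> 'a set set" where
  "M2 F M = M - M1 F M"

definition center :: "'a set set \<Rightarrow> 'a set set \<Rightarrow> 'a set \<Rightarrow> 'a" where
  "center F M A = (THE x. x \<in> A \<and> (\<forall>E\<in>D1A F M A. x \<in> E))"

definition E1 :: "'a set set \<Rightarrow> 'a set set \<Rightarrow> 'a set set" where
  "E1 F M = (\<Union>A\<in>M1 F M. star F (center F M A))"

definition E2 :: "'a set set \<Rightarrow> 'a set set \<Rightarrow> 'a set set" where
  "E2 F M = {E\<in>F. \<forall>B\<in>M2 F M. E \<inter> B = {}} - E1 F M"

end

theory Submission
  imports Defs
begin

text \<open>Suppose some edge \<open>E\<close> lies in \<open>\<E>\<^sub>2\<close>. The members of \<open>\<M>\<close> that \<open>E\<close> meets, at most three,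
  all lie in \<open>\<M>\<^sub>1\<close>, and \<open>E\<close> avoids their centres. Since each \<open>D\<^sub>1(A\<^sub>i)\<close> has at least seven edges,
  all through the centre of \<open>A\<^sub>i\<close>, one can greedily pick pairwise disjoint edges
  \<open>D\<^sub>i \<in> D\<^sub>1(A\<^sub>i)\<close> disjoint from \<open>E\<close>. Replacing those \<open>A\<^sub>i\<close> by the \<open>D\<^sub>i\<close> together with \<open>E\<close>
  enlarges the maximum matching. The centres themselves exist by the same kind of exchange.\<close>

lemma card_le_card_of_disjoint_traces:
  assumes "finite W"
    and meets: "\<And>G. G \<in> \<G> \<Longrightarrow> G \<inter> W \<noteq> {}"
    and disjoint: "\<And>G G'. G \<in> \<G> \<Longrightarrow> G' \<in> \<G> \<Longrightarrow> G \<noteq> G' \<Longrightarrow> G \<inter> G' \<inter> W = {}"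
  shows "card \<G> \<le> card W"
proof -
  define pick where "pick G = (SOME w. w \<in> G \<inter> W)" for G
  have pick: "pick G \<in> G \<inter> W" if "G \<in> \<G>" for G
    using meets[OF that] unfolding pick_def by (metis ex_in_conv someI_ex)
  have "inj_on pick \<G>"
  proof (rule inj_onI)
    fix G G' assume "G \<in> \<G>" "G' \<in> \<G>" "pick G = pick G'"
    then have "pick G \<in> G \<inter> G' \<inter> W"
      using pick by (metis IntE IntI)
    then show "G = G'"
      using disjoint \<open>G \<in> \<G>\<close> \<open>G' \<in> \<G>\<close> by blast
  qed
  then show ?thesis
    using pick \<open>finite W\<close> by (intro card_inj_on_le) auto
qed

lemma uniform3_card: "uniform3 F \<Longrightarrow> E \<in> F \<Longrightarrow> card E = 3"
  unfolding uniform3_def by auto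

lemma uniform3_finite: "uniform3 F \<Longrightarrow> E \<in> F \<Longrightarrow> finite E"
  using uniform3_card card.infinite by fastforce

lemma linear_family_inter_eq_singleton:
  assumes "uniform3 F" "linear_family F" "E \<in> F" "E' \<in> F" "E \<noteq> E'" "c \<in> E" "c \<in> E'"
  shows "E \<inter> E' = {c}"
proof -
  have "card (E \<inter> E') \<le> 1"
    using assms unfolding linear_family_def by auto
  moreover have "finite (E \<inter> E')"
    using assms uniform3_finite by blast
  ultimately show ?thesis
    using assms by (auto simp: card_le_Suc0_iff_eq)
qed

lemma is_matching_disjoint:
  "is_matching F M \<Longrightarrow> A \<in> M \<Longrightarrow> A' \<in> M \<Longrightarrow> A \<noteq> A' \<Longrightarrow> A \<inter> A' = {}"
  unfolding is_matching_def by auto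

lemma card_matching_meeting_le:
  assumes "is_matching F M" "finite E"
  shows "card {A \<in> M. A \<inter> E \<noteq> {}} \<le> card E"
proof (rule card_le_card_of_disjoint_traces)
  fix A A' assume "A \<in> {A \<in> M. A \<inter> E \<noteq> {}}" "A' \<in> {A \<in> M. A \<inter> E \<noteq> {}}" "A \<noteq> A'"
  then show "A \<inter> A' \<inter> E = {}"
    using is_matching_disjoint[OF assms(1)] by blast
qed (use assms in auto)

lemma is_matching_exchange:
  assumes M: "is_matching F M" and "T \<subseteq> M" "G \<subseteq> F"
    and disjoint: "\<And>g g'. g \<in> G \<Longrightarrow> g' \<in> G \<Longrightarrow> g \<noteq> g' \<Longrightarrow> g \<inter> g' = {}"
    and trace: "\<And>g. g \<in> G \<Longrightarrow> g \<inter> \<Union>M \<subseteq> \<Union>T"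
  shows "is_matching F ((M - T) \<union> G)"
proof -
  have "b \<inter> g = {}" if "b \<in> M - T" "g \<in> G" for b g
  proof -
    have "b \<inter> t = {}" if "t \<in> T" for t
      using is_matching_disjoint[OF M] \<open>b \<in> M - T\<close> \<open>T \<subseteq> M\<close> that by blast
    then show ?thesis
      using trace[OF \<open>g \<in> G\<close>] \<open>b \<in> M - T\<close> by blast
  qed
  then show ?thesis
    using assms unfolding is_matching_def
    by (metis DiffD1 UnE Un_Diff_Int inf_commute sup.boundedE sup.boundedI)
qed

lemma max_matching_exchange_card_le:
  assumes "finite F" and max: "is_max_matching F M" and "T \<subseteq> M" "G \<subseteq> F" "G \<inter> M = {}"
    and "\<And>g g'. g \<in> G \<Longrightarrow> g' \<in> G \<Longrightarrow> g \<noteq> g' \<Longrightarrow> g \<inter> g' = {}"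
    and "\<And>g. g \<in> G \<Longrightarrow> g \<inter> \<Union>M \<subseteq> \<Union>T"
  shows "card G \<le> card T"
proof -
  have M: "is_matching F M"
    using max unfolding is_max_matching_def by blast
  then have "finite M"
    using \<open>finite F\<close> finite_subset unfolding is_matching_def by blast
  then have "finite T"
    using \<open>T \<subseteq> M\<close> finite_subset by blast
  have "finite G"
    using \<open>G \<subseteq> F\<close> \<open>finite F\<close> by (rule finite_subset)
  have "card M - card T + card G = card (M - T) + card G"
    using card_Diff_subset[OF \<open>finite T\<close> \<open>T \<subseteq> M\<close>] by simp
  also have "\<dots> = card ((M - T) \<union> G)"
  proof (rule card_Un_disjoint [symmetric])
    show "finite (M - T)" using \<open>finite M\<close> by blast
    show "(M - T) \<inter> G = {}" using \<open>G \<inter> M = {}\<close> by blast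
  qed (rule \<open>finite G\<close>)
  also have "\<dots> \<le> card M"
    using max is_matching_exchange[OF M assms(3,4,6,7)] unfolding is_max_matching_def by blast
  finally show ?thesis
    using card_mono[OF \<open>finite M\<close> \<open>T \<subseteq> M\<close>] by linarith
qed

lemma D1A_trace:
  assumes "A \<in> M" "D \<in> D1A F M A"
  obtains u where "u \<in> A" "D \<inter> \<Union>M = {u}"
proof -
  obtain u where u: "D \<inter> \<Union>M = {u}"
    using assms card_1_singletonE unfolding D1A_def D1_def by blast
  moreover have "D \<inter> A \<subseteq> {u}" "D \<inter> A \<noteq> {}"
    using assms u unfolding D1A_def by blast+
  then have "u \<in> A" by blast
  ultimately show ?thesis
    using that by blast
qed

lemma D1A_trace_subset: "A \<in> M \<Longrightarrow> D \<in> D1A F M A \<Longrightarrow> D \<inter> \<Union>M \<subseteq> A"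
  by (metis D1A_trace singletonD subsetI)

lemma D1A_trace_eq_singleton:
  assumes "A \<in> M" "D \<in> D1A F M A" "u \<in> A" "u \<in> D"
  shows "D \<inter> \<Union>M = {u}"
proof -
  obtain u0 where "D \<inter> \<Union>M = {u0}"
    using D1A_trace[OF assms(1,2)] by metis
  moreover have "u \<in> D \<inter> \<Union>M"
    using assms by blast
  ultimately show ?thesis by auto
qed

lemma D1_notin_matching:
  assumes "uniform3 F" "D \<in> D1 F M"
  shows "D \<notin> M"
proof
  assume "D \<in> M"
  then have "D \<inter> \<Union>M = D" by blast
  then show False
    using assms uniform3_card unfolding D1_def by fastforce
qed

lemma card_D1A_diff_cover:
  assumes "uniform3 F" "A \<in> M" "D \<in> D1A F M A"
  shows "card (D - \<Union>M) = 2"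
proof -
  obtain u where "D \<inter> \<Union>M = {u}"
    using D1A_trace[OF assms(2,3)] by metis
  then have "D - \<Union>M = D - {u}" "u \<in> D" by blast+
  moreover have "card D = 3"
    using assms uniform3_card unfolding D1A_def D1_def by blast
  ultimately show ?thesis by simp
qed

locale linear_3uniform_max_matching =
  fixes F M :: "'a set set"
  assumes finite_F: "finite F"
    and uniform: "uniform3 F"
    and linear: "linear_family F"
    and max_matching: "is_max_matching F M"
begin

lemma matching: "is_matching F M"
  using max_matching unfolding is_max_matching_def by blast

lemma matching_subset: "M \<subseteq> F"
  using matching unfolding is_matching_def by blast

lemma finite_M: "finite M"
  using finite_F matching_subset by (rule rev_finite_subset)

lemma D1A_subset: "D1A F M A \<subseteq> F"
  unfolding D1A_def D1_def by blast

lemma finite_D1A: "finite (D1A F M A)"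
  using finite_F D1A_subset by (rule rev_finite_subset)

lemma D1A_at_distinct_vertices_meet:
  assumes "A \<in> M" "D \<in> D1A F M A" "D' \<in> D1A F M A"
    and "D \<inter> \<Union>M = {u}" "D' \<inter> \<Union>M = {u'}" "u \<noteq> u'"
  shows "D \<inter> D' \<noteq> {}"
proof
  assume disjoint: "D \<inter> D' = {}"
  have "D \<noteq> D'"
    using assms(4-6) by blast
  have "card {D, D'} \<le> card {A}"
  proof (rule max_matching_exchange_card_le[OF finite_F max_matching])
    show "{D, D'} \<inter> M = {}"
      using assms(2,3) D1_notin_matching[OF uniform] unfolding D1A_def by blast
    show "\<And>g. g \<in> {D, D'} \<Longrightarrow> g \<inter> \<Union>M \<subseteq> \<Union>{A}"
      using D1A_trace_subset[OF assms(1,2)] D1A_trace_subset[OF assms(1,3)] by auto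
  qed (use assms D1A_subset disjoint in auto)
  then show False
    using \<open>D \<noteq> D'\<close> by simp
qed

lemma card_D1A_through_le_2:
  assumes A: "A \<in> M" and D': "D' \<in> D1A F M A" and "u \<in> A" "u \<notin> D'"
  shows "card {D \<in> D1A F M A. u \<in> D} \<le> 2"
proof -
  obtain u' where u': "D' \<inter> \<Union>M = {u'}"
    using D1A_trace[OF A D'] by metis
  have "u \<in> \<Union>M"
    using A \<open>u \<in> A\<close> by blast
  have "card {D \<in> D1A F M A. u \<in> D} \<le> card (D' - \<Union>M)"
  proof (rule card_le_card_of_disjoint_traces)
    show "finite (D' - \<Union>M)"
      using uniform3_finite[OF uniform subsetD[OF D1A_subset D']] by (rule finite_Diff)
  next
    fix D assume "D \<in> {D \<in> D1A F M A. u \<in> D}"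
    then have D: "D \<in> D1A F M A" "u \<in> D" by simp_all
    then have trace: "D \<inter> \<Union>M = {u}"
      using D1A_trace_eq_singleton[OF A D(1) \<open>u \<in> A\<close>] by simp
    have "u \<noteq> u'"
      using u' \<open>u \<notin> D'\<close> by auto
    then have "D \<inter> D' \<noteq> {}"
      by (rule D1A_at_distinct_vertices_meet[OF A D(1) D' trace u'])
    then show "D \<inter> (D' - \<Union>M) \<noteq> {}"
      using trace \<open>u \<notin> D'\<close> by auto
  next
    fix D1 D2 assume "D1 \<in> {D \<in> D1A F M A. u \<in> D}" "D2 \<in> {D \<in> D1A F M A. u \<in> D}" "D1 \<noteq> D2"
    then have "D1 \<inter> D2 = {u}"
      using linear_family_inter_eq_singleton[OF uniform linear, of D1 D2 u] D1A_subset by blast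
    then show "D1 \<inter> D2 \<inter> (D' - \<Union>M) = {}"
      using \<open>u \<in> \<Union>M\<close> by auto
  qed
  also have "\<dots> = 2"
    using card_D1A_diff_cover[OF uniform A D'] .
  finally show ?thesis .
qed

text \<open>Were there no common vertex, each of the three vertices of \<open>A\<close> would lie in at most two
  edges of \<open>D\<^sub>1(A)\<close>, contradicting \<open>d\<^sub>1(A) \<ge> 7\<close>.\<close>
lemma D1A_common_vertex:
  assumes "A \<in> M1 F M"
  shows "\<exists>x\<in>A. \<forall>D\<in>D1A F M A. x \<in> D"
proof (rule ccontr)
  assume no_common: "\<not> ?thesis"
  have A: "A \<in> M" "A \<in> F" and "d1 F M A \<ge> 7"
    using assms matching_subset unfolding M1_def by auto
  have "D1A F M A = (\<Union>u\<in>A. {D \<in> D1A F M A. u \<in> D})"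
    unfolding D1A_def by blast
  then have "card (D1A F M A) = card (\<Union>u\<in>A. {D \<in> D1A F M A. u \<in> D})"
    by simp
  also have "\<dots> \<le> (\<Sum>u\<in>A. card {D \<in> D1A F M A. u \<in> D})"
    by (rule card_UN_le[OF uniform3_finite[OF uniform A(2)]])
  also have "\<dots> \<le> (\<Sum>u\<in>A. 2)"
  proof (rule sum_mono)
    fix u assume "u \<in> A"
    then obtain D' where "D' \<in> D1A F M A" "u \<notin> D'"
      using no_common by blast
    then show "card {D \<in> D1A F M A. u \<in> D} \<le> 2"
      using card_D1A_through_le_2 A(1) \<open>u \<in> A\<close> by blast
  qed
  also have "\<dots> = 6"
    using uniform3_card[OF uniform A(2)] by simp
  finally show False
    using \<open>d1 F M A \<ge> 7\<close> unfolding d1_def by linarith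
qed

lemma D1A_common_vertex_unique:
  assumes "A \<in> M1 F M"
  shows "\<exists>!x. x \<in> A \<and> (\<forall>D\<in>D1A F M A. x \<in> D)"
proof -
  have "A \<in> M" "card (D1A F M A) \<ge> 7"
    using assms unfolding M1_def d1_def by auto
  then obtain D0 where "D0 \<in> D1A F M A"
    by (metis card.empty ex_in_conv not_numeral_le_zero)
  then obtain u where "D0 \<inter> \<Union>M = {u}"
    using D1A_trace[OF \<open>A \<in> M\<close>] by metis
  have unique: "x = u" if "x \<in> A \<and> (\<forall>D\<in>D1A F M A. x \<in> D)" for x
  proof -
    have "x \<in> D0 \<inter> \<Union>M"
      using that \<open>A \<in> M\<close> \<open>D0 \<in> D1A F M A\<close> by auto
    then show ?thesis
      using \<open>D0 \<inter> \<Union>M = {u}\<close> by auto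
  qed
  obtain x where "x \<in> A \<and> (\<forall>D\<in>D1A F M A. x \<in> D)"
    using D1A_common_vertex[OF assms] by auto
  then show ?thesis
    by (metis unique)
qed

lemma center_mem:
  assumes "A \<in> M1 F M"
  shows "center F M A \<in> A" and "\<And>D. D \<in> D1A F M A \<Longrightarrow> center F M A \<in> D"
  using theI'[OF D1A_common_vertex_unique[OF assms]] unfolding center_def by blast+

lemma D1A_trace_center:
  assumes "A \<in> M1 F M" "D \<in> D1A F M A"
  shows "D \<inter> \<Union>M = {center F M A}"
proof -
  have "A \<in> M"
    using assms(1) unfolding M1_def by simp
  then show ?thesis
    using D1A_trace_eq_singleton center_mem assms by metis
qed

text \<open>Every candidate that meets \<open>E\<close> or an earlier choice \<open>D B\<close> passes through the centre of \<open>A\<close>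
  and meets it again outside \<open>\<Union>\<M>\<close>; by linearity these second vertices are distinct, and there are
  at most \<open>2 + 2\<cdot>2\<close> of them.\<close>
lemma D1A_edge_avoiding:
  assumes A: "A \<in> M1 F M" and S: "S \<subseteq> M1 F M" "A \<notin> S" "finite S" "card S \<le> 2"
    and D: "\<And>B. B \<in> S \<Longrightarrow> D B \<in> D1A F M B"
    and E: "E \<in> F" "E \<inter> \<Union>M \<noteq> {}" "center F M A \<notin> E"
  obtains d where "d \<in> D1A F M A" "d \<inter> E = {}" "\<And>B. B \<in> S \<Longrightarrow> d \<inter> D B = {}"
proof -
  let ?X = "\<Union>M" and ?c = "center F M A"
  define W where "W = (E - ?X) \<union> (\<Union>B\<in>S. D B - ?X)"
  define Bad where "Bad = {d \<in> D1A F M A. d \<inter> E \<noteq> {} \<or> (\<exists>B\<in>S. d \<inter> D B \<noteq> {})}"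
  have "A \<in> M"
    using A unfolding M1_def by simp
  have edge_finite: "finite (D B)" if "B \<in> S" for B
    using uniform3_finite[OF uniform subsetD[OF D1A_subset D[OF that]]] .
  have "card Bad \<le> card W"
  proof (rule card_le_card_of_disjoint_traces)
    show "finite W"
      unfolding W_def using uniform3_finite[OF uniform E(1)] edge_finite S(3) by auto
  next
    fix d assume "d \<in> Bad"
    then have d: "d \<in> D1A F M A" and meets: "d \<inter> E \<noteq> {} \<or> (\<exists>B\<in>S. d \<inter> D B \<noteq> {})"
      unfolding Bad_def by auto
    have trace: "d \<inter> ?X = {?c}"
      using D1A_trace_center[OF A d] .
    show "d \<inter> W \<noteq> {}"
    proof (cases "d \<inter> E = {}")
      case False
      then obtain z where "z \<in> d" "z \<in> E" by blast
      then have "z \<notin> ?X"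
        using trace E(3) by (metis IntI singletonD)
      then show ?thesis
        using \<open>z \<in> d\<close> \<open>z \<in> E\<close> unfolding W_def by blast
    next
      case True
      then obtain B z where B: "B \<in> S" and z: "z \<in> d" "z \<in> D B"
        using meets by blast
      have "z \<notin> ?X"
      proof
        assume "z \<in> ?X"
        have "B \<in> M1 F M" "A \<noteq> B"
          using B S by auto
        then have "z = ?c" "z = center F M B"
          using trace D1A_trace_center[OF _ D[OF B]] z \<open>z \<in> ?X\<close> by auto
        moreover have "?c \<in> A" "center F M B \<in> B"
          using center_mem(1) A \<open>B \<in> M1 F M\<close> by auto
        moreover have "A \<inter> B = {}"
          using is_matching_disjoint[OF matching \<open>A \<in> M\<close>] \<open>B \<in> M1 F M\<close> \<open>A \<noteq> B\<close>
          unfolding M1_def by auto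
        ultimately show False by auto
      qed
      then show ?thesis
        using B z unfolding W_def by blast
    qed
  next
    fix d1 d2 assume "d1 \<in> Bad" "d2 \<in> Bad" "d1 \<noteq> d2"
    then have "d1 \<in> F" "d2 \<in> F" "?c \<in> d1" "?c \<in> d2"
      using D1A_subset center_mem(2)[OF A] unfolding Bad_def by auto
    then have "d1 \<inter> d2 = {?c}"
      using linear_family_inter_eq_singleton[OF uniform linear] \<open>d1 \<noteq> d2\<close> by blast
    then show "d1 \<inter> d2 \<inter> W = {}"
      using center_mem(1)[OF A] \<open>A \<in> M\<close> unfolding W_def by auto
  qed
  also have "\<dots> \<le> card (E - ?X) + card (\<Union>B\<in>S. D B - ?X)"
    unfolding W_def by (rule card_Un_le)
  also have "card (\<Union>B\<in>S. D B - ?X) \<le> (\<Sum>B\<in>S. card (D B - ?X))"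
    by (rule card_UN_le[OF S(3)])
  also have "(\<Sum>B\<in>S. card (D B - ?X)) = 2 * card S"
  proof -
    have "card (D B - ?X) = 2" if "B \<in> S" for B
      using card_D1A_diff_cover[OF uniform _ D[OF that]] that S(1) unfolding M1_def by auto
    then show ?thesis by simp
  qed
  finally have "card Bad \<le> card (E - ?X) + 2 * card S"
    by simp
  moreover have "card (E - ?X) < card E"
    using E(2) uniform3_finite[OF uniform E(1)] by (intro psubset_card_mono) auto
  ultimately have "card Bad < 7"
    using S(4) uniform3_card[OF uniform E(1)] by linarith
  moreover have "card (D1A F M A) \<ge> 7"
    using A unfolding M1_def d1_def by simp
  moreover have "finite Bad"
    unfolding Bad_def using finite_D1A by simp
  ultimately have "\<not> D1A F M A \<subseteq> Bad"
    using card_mono[of Bad "D1A F M A"] by linarith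
  then show ?thesis
    using that unfolding Bad_def by blast
qed

lemma D1A_system_avoiding:
  assumes "S \<subseteq> M1 F M" "card S \<le> 3" "E \<in> F"
    and "\<And>A. A \<in> S \<Longrightarrow> A \<inter> E \<noteq> {}" "\<And>A. A \<in> S \<Longrightarrow> center F M A \<notin> E"
  obtains D where "\<And>A. A \<in> S \<Longrightarrow> D A \<in> D1A F M A" "\<And>A. A \<in> S \<Longrightarrow> D A \<inter> E = {}"
    "\<And>A A'. A \<in> S \<Longrightarrow> A' \<in> S \<Longrightarrow> A \<noteq> A' \<Longrightarrow> D A \<inter> D A' = {}"
proof -
  have "finite S"
    using finite_M assms(1) unfolding M1_def by (auto intro: finite_subset)
  then have "\<exists>D. (\<forall>A\<in>S. D A \<in> D1A F M A \<and> D A \<inter> E = {}) \<and>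
      (\<forall>A\<in>S. \<forall>A'\<in>S. A \<noteq> A' \<longrightarrow> D A \<inter> D A' = {})"
    using assms(1,2,4,5)
  proof (induction S rule: finite_induct)
    case empty
    then show ?case by simp
  next
    case (insert A S)
    then obtain D where D: "\<forall>B\<in>S. D B \<in> D1A F M B \<and> D B \<inter> E = {}"
      and disjoint: "\<forall>B\<in>S. \<forall>B'\<in>S. B \<noteq> B' \<longrightarrow> D B \<inter> D B' = {}"
      by auto
    have "A \<in> M1 F M" "S \<subseteq> M1 F M" "card S \<le> 2"
      using insert by auto
    moreover have "E \<inter> \<Union>M \<noteq> {}"
      using insert.prems(3) \<open>A \<in> M1 F M\<close> unfolding M1_def by blast
    ultimately obtain d where d: "d \<in> D1A F M A" "d \<inter> E = {}" "\<And>B. B \<in> S \<Longrightarrow> d \<inter> D B = {}"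
      using D1A_edge_avoiding[of A S D E] insert D assms(3) by auto
    have "\<forall>B\<in>insert A S. \<forall>B'\<in>insert A S. B \<noteq> B' \<longrightarrow> (D(A := d)) B \<inter> (D(A := d)) B' = {}"
      using disjoint d(3) insert.hyps(2) by (auto simp: Int_commute)
    then show ?case
      using D d(1,2) insert.hyps(2) by (intro exI[of _ "D(A := d)"]) auto
  qed
  then show ?thesis
    using that by metis
qed

lemma no_augmenting_D1A_system:
  assumes "T \<subseteq> M" "E \<in> F" "E \<notin> M" "E \<inter> \<Union>M \<subseteq> \<Union>T"
    and D: "\<And>A. A \<in> T \<Longrightarrow> D A \<in> D1A F M A" "\<And>A. A \<in> T \<Longrightarrow> D A \<inter> E = {}"
    and disjoint: "\<And>A A'. A \<in> T \<Longrightarrow> A' \<in> T \<Longrightarrow> A \<noteq> A' \<Longrightarrow> D A \<inter> D A' = {}"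
  shows False
proof -
  have nonempty: "X \<noteq> {}" if "X \<in> F" for X
    using uniform3_card[OF uniform that] by auto
  have D_F: "D A \<in> F" if "A \<in> T" for A
    using D(1)[OF that] D1A_subset by blast
  have "inj_on D T"
    using disjoint nonempty D_F by (metis inj_onI Int_absorb)
  moreover have "E \<notin> D ` T"
  proof
    assume "E \<in> D ` T"
    then obtain A where "A \<in> T" "E = D A" by blast
    then show False
      using D(2) nonempty[OF D_F] by (metis Int_absorb)
  qed
  moreover have "finite T"
    using \<open>T \<subseteq> M\<close> finite_M by (rule finite_subset)
  ultimately have "card (insert E (D ` T)) = card T + 1"
    by (simp add: card_image)
  moreover have "card (insert E (D ` T)) \<le> card T"
  proof (rule max_matching_exchange_card_le[OF finite_F max_matching \<open>T \<subseteq> M\<close>])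
    show "insert E (D ` T) \<subseteq> F"
      using \<open>E \<in> F\<close> D_F by blast
    show "insert E (D ` T) \<inter> M = {}"
      using \<open>E \<notin> M\<close> D(1) D1_notin_matching[OF uniform] unfolding D1A_def by blast
    show "g \<inter> g' = {}" if "g \<in> insert E (D ` T)" "g' \<in> insert E (D ` T)" "g \<noteq> g'" for g g'
      using that D(2) disjoint by (metis Int_commute imageE insertE)
    show "g \<inter> \<Union>M \<subseteq> \<Union>T" if "g \<in> insert E (D ` T)" for g
      using that \<open>E \<inter> \<Union>M \<subseteq> \<Union>T\<close> D(1) D1A_trace_subset \<open>T \<subseteq> M\<close> by blast
  qed
  ultimately show False by simp
qed

end

theorem proposition7:
  fixes F M :: "'a set set"
  assumes "finite F"
    and "uniform3 F"
    and "linear_family F"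
    and "S_fam F = {}"
    and "is_max_matching F M"
  shows "E2 F M = {}"
proof (rule ccontr)
  interpret linear_3uniform_max_matching F M
    using assms(1,2,3,5) by unfold_locales
  assume "E2 F M \<noteq> {}"
  then obtain E where "E \<in> F" and avoids_M2: "\<forall>B\<in>M2 F M. E \<inter> B = {}" and "E \<notin> E1 F M"
    unfolding E2_def by blast
  define T where "T = {A \<in> M. A \<inter> E \<noteq> {}}"
  have "T \<subseteq> M1 F M"
    using avoids_M2 unfolding T_def M2_def by blast
  have centers: "center F M A \<notin> E" if "A \<in> M1 F M" for A
    using \<open>E \<in> F\<close> \<open>E \<notin> E1 F M\<close> that unfolding E1_def star_def by blast
  have "card T \<le> 3"
    using card_matching_meeting_le[OF matching uniform3_finite[OF uniform \<open>E \<in> F\<close>]]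
      uniform3_card[OF uniform \<open>E \<in> F\<close>] unfolding T_def by simp
  then obtain D where "\<And>A. A \<in> T \<Longrightarrow> D A \<in> D1A F M A" "\<And>A. A \<in> T \<Longrightarrow> D A \<inter> E = {}"
    "\<And>A A'. A \<in> T \<Longrightarrow> A' \<in> T \<Longrightarrow> A \<noteq> A' \<Longrightarrow> D A \<inter> D A' = {}"
    using D1A_system_avoiding[OF \<open>T \<subseteq> M1 F M\<close> _ \<open>E \<in> F\<close>] centers \<open>T \<subseteq> M1 F M\<close>
    unfolding T_def by blast
  moreover have "E \<notin> M"
    using centers center_mem(1) \<open>T \<subseteq> M1 F M\<close> uniform3_card[OF uniform \<open>E \<in> F\<close>]
    unfolding T_def by fastforce
  moreover have "E \<inter> \<Union>M \<subseteq> \<Union>T"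
    unfolding T_def by blast
  ultimately show False
    using no_augmenting_D1A_system[of T E D] \<open>E \<in> F\<close> unfolding T_def by blast
qed

end
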